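(* Let $\mathbb C$ be a pointed regular Mal'tsev category with finite limits and finite colimits, and let $W,X,Y$ be objects of $\mathbb C$. Then the morphism $$\langle [\iota_1,\iota_2,0],[\iota_1,0,\iota_2]\rangle\colon W+X+Y\to (W+X)\times_W(W+Y)$$ is a regular epimorphism. In particular, if $\mathbb C$ is a normal Mal'tsev category (with these properties), then this morphism is a normal epimorphism.
   Context: $\iota_i$ denote coproduct injections, $[a,b,c]$ the morphism out of a ternary coproduct with the given components, $\langle a,b\rangle$ pairing into a pullback; $(W+X)\times_W(W+Y)$ is the pullback of $[1,0]\colon W+X\to W$ and $[1,0]\colon W+Y\to W$. A Mal'tsev category is a finitely complete category in which every reflexive relation is an equivalence relation. A normal category is a regular pointed category in which every regular epimorphism is a normal epimorphism (a cokernel of some morphism). *)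

theory Defs
  imports Main
begin

text \<open>A category is given by a set of objects, a set of arrows, domain, codomain,
  identities and composition; Comp C g f denotes g o f (first f, then g).\<close>

record ('o, 'm) cat =
  Ob   :: "'o set"
  Ar   :: "'m set"
  Dom  :: "'m \<Rightarrow> 'o"
  Cod  :: "'m \<Rightarrow> 'o"
  Id   :: "'o \<Rightarrow> 'm"
  Comp :: "'m \<Rightarrow> 'm \<Rightarrow> 'm"

definition hom :: "('o, 'm) cat \<Rightarrow> 'o \<Rightarrow> 'o \<Rightarrow> 'm set" where
  "hom C A B = {f \<in> Ar C. Dom C f = A \<and> Cod C f = B}"

definition category :: "('o, 'm) cat \<Rightarrow> bool" where
  "category C \<longleftrightarrow>
     (\<forall>f \<in> Ar C. Dom C f \<in> Ob C \<and> Cod C f \<in> Ob C)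
   \<and> (\<forall>A \<in> Ob C. Id C A \<in> hom C A A)
   \<and> (\<forall>f \<in> Ar C. \<forall>g \<in> Ar C. Cod C f = Dom C g \<longrightarrow> Comp C g f \<in> hom C (Dom C f) (Cod C g))
   \<and> (\<forall>f \<in> Ar C. Comp C f (Id C (Dom C f)) = f \<and> Comp C (Id C (Cod C f)) f = f)
   \<and> (\<forall>f \<in> Ar C. \<forall>g \<in> Ar C. \<forall>h \<in> Ar C. Cod C f = Dom C g \<longrightarrow> Cod C g = Dom C h \<longrightarrow>
        Comp C h (Comp C g f) = Comp C (Comp C h g) f)"

definition terminal :: "('o, 'm) cat \<Rightarrow> 'o \<Rightarrow> bool" where
  "terminal C T \<longleftrightarrow> T \<in> Ob C \<and> (\<forall>A \<in> Ob C. \<exists>!f. f \<in> hom C A T)"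

definition initial :: "('o, 'm) cat \<Rightarrow> 'o \<Rightarrow> bool" where
  "initial C I \<longleftrightarrow> I \<in> Ob C \<and> (\<forall>A \<in> Ob C. \<exists>!f. f \<in> hom C I A)"

definition zero_object :: "('o, 'm) cat \<Rightarrow> 'o \<Rightarrow> bool" where
  "zero_object C Z \<longleftrightarrow> terminal C Z \<and> initial C Z"

definition pointed :: "('o, 'm) cat \<Rightarrow> bool" where
  "pointed C \<longleftrightarrow> (\<exists>Z. zero_object C Z)"

definition zero_mor :: "('o, 'm) cat \<Rightarrow> 'm \<Rightarrow> bool" where
  "zero_mor C f \<longleftrightarrow> f \<in> Ar C \<and>
     (\<exists>Z g h. zero_object C Z \<and> g \<in> hom C (Dom C f) Z \<and> h \<in> hom C Z (Cod C f) \<and> f = Comp C h g)"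

definition pullback :: "('o, 'm) cat \<Rightarrow> 'm \<Rightarrow> 'm \<Rightarrow> 'o \<Rightarrow> 'm \<Rightarrow> 'm \<Rightarrow> bool" where
  "pullback C f g P p1 p2 \<longleftrightarrow>
     f \<in> Ar C \<and> g \<in> Ar C \<and> Cod C f = Cod C g \<and>
     p1 \<in> hom C P (Dom C f) \<and> p2 \<in> hom C P (Dom C g) \<and> Comp C f p1 = Comp C g p2 \<and>
     (\<forall>Q q1 q2. q1 \<in> hom C Q (Dom C f) \<longrightarrow> q2 \<in> hom C Q (Dom C g) \<longrightarrow> Comp C f q1 = Comp C g q2 \<longrightarrow>
        (\<exists>!u. u \<in> hom C Q P \<and> Comp C p1 u = q1 \<and> Comp C p2 u = q2))"

definition pushout :: "('o, 'm) cat \<Rightarrow> 'm \<Rightarrow> 'm \<Rightarrow> 'o \<Rightarrow> 'm \<Rightarrow> 'm \<Rightarrow> bool" where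
  "pushout C f g P p1 p2 \<longleftrightarrow>
     f \<in> Ar C \<and> g \<in> Ar C \<and> Dom C f = Dom C g \<and>
     p1 \<in> hom C (Cod C f) P \<and> p2 \<in> hom C (Cod C g) P \<and> Comp C p1 f = Comp C p2 g \<and>
     (\<forall>Q q1 q2. q1 \<in> hom C (Cod C f) Q \<longrightarrow> q2 \<in> hom C (Cod C g) Q \<longrightarrow> Comp C q1 f = Comp C q2 g \<longrightarrow>
        (\<exists>!u. u \<in> hom C P Q \<and> Comp C u p1 = q1 \<and> Comp C u p2 = q2))"

text \<open>Finite limits: a terminal object and all pullbacks (standard characterisation).\<close>
definition has_finite_limits :: "('o, 'm) cat \<Rightarrow> bool" where
  "has_finite_limits C \<longleftrightarrow> (\<exists>T. terminal C T) \<and>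
     (\<forall>f \<in> Ar C. \<forall>g \<in> Ar C. Cod C f = Cod C g \<longrightarrow> (\<exists>P p1 p2. pullback C f g P p1 p2))"

definition has_finite_colimits :: "('o, 'm) cat \<Rightarrow> bool" where
  "has_finite_colimits C \<longleftrightarrow> (\<exists>I. initial C I) \<and>
     (\<forall>f \<in> Ar C. \<forall>g \<in> Ar C. Dom C f = Dom C g \<longrightarrow> (\<exists>P p1 p2. pushout C f g P p1 p2))"

definition coequalizer :: "('o, 'm) cat \<Rightarrow> 'm \<Rightarrow> 'm \<Rightarrow> 'm \<Rightarrow> bool" where
  "coequalizer C f g q \<longleftrightarrow>
     f \<in> Ar C \<and> g \<in> Ar C \<and> Dom C f = Dom C g \<and> Cod C f = Cod C g \<and>
     q \<in> Ar C \<and> Dom C q = Cod C f \<and> Comp C q f = Comp C q g \<and>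
     (\<forall>h \<in> Ar C. Dom C h = Cod C f \<longrightarrow> Comp C h f = Comp C h g \<longrightarrow>
        (\<exists>!u. u \<in> hom C (Cod C q) (Cod C h) \<and> Comp C u q = h))"

definition regular_epi :: "('o, 'm) cat \<Rightarrow> 'm \<Rightarrow> bool" where
  "regular_epi C q \<longleftrightarrow> (\<exists>f g. coequalizer C f g q)"

definition normal_epi :: "('o, 'm) cat \<Rightarrow> 'm \<Rightarrow> bool" where
  "normal_epi C q \<longleftrightarrow> (\<exists>k z. zero_mor C z \<and> coequalizer C k z q)"

definition regular_category :: "('o, 'm) cat \<Rightarrow> bool" where
  "regular_category C \<longleftrightarrow> category C \<and> has_finite_limits C
   \<and> (\<forall>f \<in> Ar C. \<forall>P p1 p2. pullback C f f P p1 p2 \<longrightarrow> (\<exists>q. coequalizer C p1 p2 q))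
   \<and> (\<forall>f g P p1 p2. regular_epi C f \<longrightarrow> pullback C f g P p1 p2 \<longrightarrow> regular_epi C p2)"

definition relation_on :: "('o, 'm) cat \<Rightarrow> 'o \<Rightarrow> 'm \<Rightarrow> 'm \<Rightarrow> bool" where
  "relation_on C X r1 r2 \<longleftrightarrow>
     r1 \<in> hom C (Dom C r1) X \<and> r2 \<in> hom C (Dom C r1) X \<and>
     (\<forall>g h. g \<in> Ar C \<longrightarrow> h \<in> Ar C \<longrightarrow> Dom C g = Dom C h \<longrightarrow> Cod C g = Dom C r1 \<longrightarrow> Cod C h = Dom C r1 \<longrightarrow>
        Comp C r1 g = Comp C r1 h \<longrightarrow> Comp C r2 g = Comp C r2 h \<longrightarrow> g = h)"

text \<open>Generalised elements: (x, y) lies in the relation if it factors through (r1, r2).\<close>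
definition rel_mem :: "('o, 'm) cat \<Rightarrow> 'm \<Rightarrow> 'm \<Rightarrow> 'm \<Rightarrow> 'm \<Rightarrow> bool" where
  "rel_mem C r1 r2 x y \<longleftrightarrow>
     (\<exists>h \<in> Ar C. Cod C h = Dom C r1 \<and> Comp C r1 h = x \<and> Comp C r2 h = y)"

definition reflexive_rel :: "('o, 'm) cat \<Rightarrow> 'o \<Rightarrow> 'm \<Rightarrow> 'm \<Rightarrow> bool" where
  "reflexive_rel C X r1 r2 \<longleftrightarrow>
     (\<exists>d \<in> hom C X (Dom C r1). Comp C r1 d = Id C X \<and> Comp C r2 d = Id C X)"

definition symmetric_rel :: "('o, 'm) cat \<Rightarrow> 'm \<Rightarrow> 'm \<Rightarrow> bool" where
  "symmetric_rel C r1 r2 \<longleftrightarrow> (\<forall>x y. rel_mem C r1 r2 x y \<longrightarrow> rel_mem C r1 r2 y x)"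

definition transitive_rel :: "('o, 'm) cat \<Rightarrow> 'm \<Rightarrow> 'm \<Rightarrow> bool" where
  "transitive_rel C r1 r2 \<longleftrightarrow>
     (\<forall>x y z. rel_mem C r1 r2 x y \<longrightarrow> rel_mem C r1 r2 y z \<longrightarrow> rel_mem C r1 r2 x z)"

definition maltsev :: "('o, 'm) cat \<Rightarrow> bool" where
  "maltsev C \<longleftrightarrow> category C \<and> has_finite_limits C \<and>
     (\<forall>X r1 r2. relation_on C X r1 r2 \<longrightarrow> reflexive_rel C X r1 r2 \<longrightarrow>
        symmetric_rel C r1 r2 \<and> transitive_rel C r1 r2)"

definition normal_category :: "('o, 'm) cat \<Rightarrow> bool" where
  "normal_category C \<longleftrightarrow> regular_category C \<and> pointed C \<and>
     (\<forall>q. regular_epi C q \<longrightarrow> normal_epi C q)"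

definition coproduct2 :: "('o, 'm) cat \<Rightarrow> 'o \<Rightarrow> 'o \<Rightarrow> 'o \<Rightarrow> 'm \<Rightarrow> 'm \<Rightarrow> bool" where
  "coproduct2 C A B S i1 i2 \<longleftrightarrow> i1 \<in> hom C A S \<and> i2 \<in> hom C B S \<and>
     (\<forall>T f g. f \<in> hom C A T \<longrightarrow> g \<in> hom C B T \<longrightarrow>
        (\<exists>!u. u \<in> hom C S T \<and> Comp C u i1 = f \<and> Comp C u i2 = g))"

definition coproduct3 :: "('o, 'm) cat \<Rightarrow> 'o \<Rightarrow> 'o \<Rightarrow> 'o \<Rightarrow> 'o \<Rightarrow> 'm \<Rightarrow> 'm \<Rightarrow> 'm \<Rightarrow> bool" where
  "coproduct3 C A B D S i1 i2 i3 \<longleftrightarrow> i1 \<in> hom C A S \<and> i2 \<in> hom C B S \<and> i3 \<in> hom C D S \<and>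
     (\<forall>T f g h. f \<in> hom C A T \<longrightarrow> g \<in> hom C B T \<longrightarrow> h \<in> hom C D T \<longrightarrow>
        (\<exists>!u. u \<in> hom C S T \<and> Comp C u i1 = f \<and> Comp C u i2 = g \<and> Comp C u i3 = h))"

end

theory Submission
  imports Defs
begin

text \<open>Factor m through its image, m = j q with q the coequalizer of the kernel pair of m and j
  monic; in a regular category m is a regular epimorphism as soon as j is a split epimorphism.
  The maps [\<iota>1, \<iota>2] and [\<iota>1, \<iota>3] into W + X + Y compose with m to the canonical sections
  \<langle>1, \<iota>1 e\<rangle> and \<langle>\<iota>1 e', 1\<rangle> of the pullback T of the split epimorphisms e and e', so both
  sections factor through j. In a Mal'tsev category this forces j to split: the relation on the
  image I relating x and y whenever \<langle>p1 j x, p2 j y\<rangle> lies in I again is reflexive, hence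
  transitive; with s1, s2 the factorizations of the two sections through j, the chain
  s1 p1 \<sim> s1 \<iota>1 e p1 \<sim> s2 p2 yields a section of j.\<close>

definition monic :: "('o, 'm) cat \<Rightarrow> 'm \<Rightarrow> bool" where
  "monic C j \<longleftrightarrow> j \<in> Ar C \<and>
     (\<forall>g h. g \<in> Ar C \<longrightarrow> h \<in> Ar C \<longrightarrow> Dom C g = Dom C h \<longrightarrow> Cod C g = Dom C j \<longrightarrow>
        Cod C h = Dom C j \<longrightarrow> Comp C j g = Comp C j h \<longrightarrow> g = h)"

locale category_ctx =
  fixes C :: "('o, 'm) cat"
  assumes category: "category C"
begin

lemma in_hom_iff: "f \<in> hom C A B \<longleftrightarrow> f \<in> Ar C \<and> Dom C f = A \<and> Cod C f = B"
  by (simp add: hom_def)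

lemma Dom_in_Ob [simp]: "f \<in> Ar C \<Longrightarrow> Dom C f \<in> Ob C"
  and Cod_in_Ob [simp]: "f \<in> Ar C \<Longrightarrow> Cod C f \<in> Ob C"
  using category unfolding category_def by blast+

lemma Id_in_Ar [simp]: "A \<in> Ob C \<Longrightarrow> Id C A \<in> Ar C"
  and Dom_Id [simp]: "A \<in> Ob C \<Longrightarrow> Dom C (Id C A) = A"
  and Cod_Id [simp]: "A \<in> Ob C \<Longrightarrow> Cod C (Id C A) = A"
  using category unfolding category_def hom_def by blast+

lemma Comp_in_Ar [simp]:
    "f \<in> Ar C \<Longrightarrow> g \<in> Ar C \<Longrightarrow> Cod C f = Dom C g \<Longrightarrow> Comp C g f \<in> Ar C"
  and Dom_Comp [simp]:
    "f \<in> Ar C \<Longrightarrow> g \<in> Ar C \<Longrightarrow> Cod C f = Dom C g \<Longrightarrow> Dom C (Comp C g f) = Dom C f"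
  and Cod_Comp [simp]:
    "f \<in> Ar C \<Longrightarrow> g \<in> Ar C \<Longrightarrow> Cod C f = Dom C g \<Longrightarrow> Cod C (Comp C g f) = Cod C g"
  using category unfolding category_def hom_def by blast+

lemma Comp_Id_left [simp]: "f \<in> Ar C \<Longrightarrow> Cod C f = B \<Longrightarrow> Comp C (Id C B) f = f"
  and Comp_Id_right [simp]: "f \<in> Ar C \<Longrightarrow> Dom C f = A \<Longrightarrow> Comp C f (Id C A) = f"
  using category unfolding category_def by blast+

lemma Comp_assoc [simp]:
  "f \<in> Ar C \<Longrightarrow> g \<in> Ar C \<Longrightarrow> h \<in> Ar C \<Longrightarrow> Cod C f = Dom C g \<Longrightarrow> Cod C g = Dom C h \<Longrightarrow>
   Comp C (Comp C h g) f = Comp C h (Comp C g f)"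
  using category unfolding category_def by metis

lemma Comp_assoc3_eq:
  assumes eq: "Comp C a (Comp C b c) = d"
    and ty: "a \<in> Ar C" "b \<in> Ar C" "c \<in> Ar C" "x \<in> Ar C"
      "Cod C b = Dom C a" "Cod C c = Dom C b" "Cod C x = Dom C c"
  shows "Comp C a (Comp C b (Comp C c x)) = Comp C d x"
proof -
  have "Comp C (Comp C a (Comp C b c)) x = Comp C a (Comp C b (Comp C c x))"
    using ty by simp
  then show ?thesis
    using eq by simp
qed

lemma zero_object_hom_unique:
  assumes "zero_object C Z" "A \<in> Ob C"
  shows "a \<in> hom C A Z \<Longrightarrow> b \<in> hom C A Z \<Longrightarrow> a = b"
    and "a \<in> hom C Z A \<Longrightarrow> b \<in> hom C Z A \<Longrightarrow> a = b"
  using assms unfolding zero_object_def terminal_def initial_def by blast+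

lemma zero_mor_unique:
  assumes "zero_mor C f" "zero_mor C g" "Dom C f = Dom C g" "Cod C f = Cod C g"
  shows "f = g"
proof -
  obtain Z g1 h1 where z1: "zero_object C Z" "g1 \<in> hom C (Dom C f) Z" "h1 \<in> hom C Z (Cod C f)"
      "f = Comp C h1 g1"
    using assms(1) unfolding zero_mor_def by blast
  obtain Z' g2 h2 where z2: "zero_object C Z'" "g2 \<in> hom C (Dom C f) Z'" "h2 \<in> hom C Z' (Cod C f)"
      "g = Comp C h2 g2"
    using assms(2-4) unfolding zero_mor_def by auto
  have Ob: "Z' \<in> Ob C" "Dom C f \<in> Ob C" "Cod C f \<in> Ob C"
    using z1(2,3) z2(2) unfolding in_hom_iff by (metis Dom_in_Ob Cod_in_Ob)+
  obtain k where k: "k \<in> hom C Z Z'"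
    using z1(1) Ob(1) unfolding zero_object_def initial_def by blast
  have t: "g1 \<in> Ar C" "h2 \<in> Ar C" "k \<in> Ar C" "Cod C g1 = Dom C k" "Cod C k = Dom C h2"
    "Dom C g1 = Dom C f" "Cod C h2 = Cod C f"
    using k z1(2) z2(3) unfolding in_hom_iff by simp_all
  have "g2 = Comp C k g1"
    by (rule zero_object_hom_unique(1)[OF z2(1) Ob(2) z2(2)]) (use k t in \<open>simp add: in_hom_iff\<close>)
  moreover have "h1 = Comp C h2 k"
    by (rule zero_object_hom_unique(2)[OF z1(1) Ob(3) z1(3)]) (use k t in \<open>simp add: in_hom_iff\<close>)
  ultimately show ?thesis
    using z1(4) z2(4) t by simp
qed

lemma zero_mor_comp:
  assumes "zero_mor C f" "h \<in> Ar C" "Dom C h = Cod C f"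
  shows "zero_mor C (Comp C h f)"
proof -
  obtain Z g1 h1 where z: "zero_object C Z" "g1 \<in> hom C (Dom C f) Z" "h1 \<in> hom C Z (Cod C f)"
      "f = Comp C h1 g1"
    using assms(1) unfolding zero_mor_def by blast
  have f: "f \<in> Ar C"
    using assms(1) unfolding zero_mor_def by blast
  have hf: "Comp C h f \<in> Ar C" "Dom C (Comp C h f) = Dom C f" "Cod C (Comp C h f) = Cod C h"
    using f assms by simp_all
  have t: "g1 \<in> Ar C" "h1 \<in> Ar C" "Cod C g1 = Dom C h1" "Cod C h1 = Dom C h"
    using z(2,3) assms(3) by (auto simp: in_hom_iff)
  have "Comp C h f = Comp C (Comp C h h1) g1"
    using z(4) t assms(2) by simp
  moreover have "Comp C h h1 \<in> hom C Z (Cod C (Comp C h f))" "g1 \<in> hom C (Dom C (Comp C h f)) Z"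
    using z(2,3) t assms(2) hf by (auto simp: in_hom_iff)
  ultimately show ?thesis
    unfolding zero_mor_def using z(1) hf(1) by blast
qed

lemma coequalizerD:
  assumes "coequalizer C f g q"
  shows "f \<in> Ar C" "g \<in> Ar C" "Dom C f = Dom C g" "Cod C f = Cod C g" "q \<in> Ar C"
    "Dom C q = Cod C f" "Comp C q f = Comp C q g"
  using assms unfolding coequalizer_def by blast+

lemma coequalizer_factor:
  assumes "coequalizer C f g q" "h \<in> Ar C" "Dom C h = Cod C f" "Comp C h f = Comp C h g"
  shows "\<exists>!u. u \<in> hom C (Cod C q) (Cod C h) \<and> Comp C u q = h"
  using assms unfolding coequalizer_def by blast

lemma coequalizer_cancel:
  assumes q: "coequalizer C f g q"
    and ab: "a \<in> Ar C" "b \<in> Ar C" "Dom C a = Cod C q" "Dom C b = Cod C q" "Cod C a = Cod C b"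
    and eq: "Comp C a q = Comp C b q"
  shows "a = b"
proof -
  note Q = coequalizerD[OF q]
  have "Comp C (Comp C a q) f = Comp C a (Comp C q f)"
    using Q(1,5,6) ab(1,3) by simp
  also have "\<dots> = Comp C (Comp C a q) g"
    using Q(2-7) ab(1,3) by simp
  finally have "\<exists>!u. u \<in> hom C (Cod C q) (Cod C (Comp C a q)) \<and> Comp C u q = Comp C a q"
    using coequalizer_factor[OF q, of "Comp C a q"] Q(5,6) ab(1,3) by simp
  moreover have "a \<in> hom C (Cod C q) (Cod C (Comp C a q))" "b \<in> hom C (Cod C q) (Cod C (Comp C a q))"
    using Q(5) ab by (simp_all add: in_hom_iff)
  ultimately show ?thesis
    using eq by (metis (no_types, lifting))
qed

lemma regular_epi_cancel:
  assumes "regular_epi C q" "a \<in> Ar C" "b \<in> Ar C" "Dom C a = Cod C q" "Dom C b = Cod C q"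
    "Cod C a = Cod C b" "Comp C a q = Comp C b q"
  shows "a = b"
  using assms coequalizer_cancel unfolding regular_epi_def by blast

lemma pullbackD:
  assumes "pullback C f g P p1 p2"
  shows "f \<in> Ar C" "g \<in> Ar C" "Cod C f = Cod C g" "p1 \<in> Ar C" "Dom C p1 = P" "Cod C p1 = Dom C f"
    "p2 \<in> Ar C" "Dom C p2 = P" "Cod C p2 = Dom C g" "Comp C f p1 = Comp C g p2"
proof -
  have "f \<in> Ar C \<and> g \<in> Ar C \<and> Cod C f = Cod C g \<and>
     p1 \<in> hom C P (Dom C f) \<and> p2 \<in> hom C P (Dom C g) \<and> Comp C f p1 = Comp C g p2"
    using assms unfolding pullback_def by blast
  then show "f \<in> Ar C" "g \<in> Ar C" "Cod C f = Cod C g" "p1 \<in> Ar C" "Dom C p1 = P"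
    "Cod C p1 = Dom C f" "p2 \<in> Ar C" "Dom C p2 = P" "Cod C p2 = Dom C g" "Comp C f p1 = Comp C g p2"
    unfolding in_hom_iff by simp_all
qed

lemma pullback_pair:
  assumes "pullback C f g P p1 p2" "q1 \<in> Ar C" "q2 \<in> Ar C" "Dom C q1 = Dom C q2"
    "Cod C q1 = Dom C f" "Cod C q2 = Dom C g" "Comp C f q1 = Comp C g q2"
  obtains u where "u \<in> Ar C" "Dom C u = Dom C q1" "Cod C u = P" "Comp C p1 u = q1" "Comp C p2 u = q2"
proof -
  have "q1 \<in> hom C (Dom C q1) (Dom C f)" "q2 \<in> hom C (Dom C q1) (Dom C g)"
    using assms by (simp_all add: in_hom_iff)
  then have "\<exists>u. u \<in> hom C (Dom C q1) P \<and> Comp C p1 u = q1 \<and> Comp C p2 u = q2"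
    using assms(1,7) unfolding pullback_def by blast
  then show ?thesis
    using that unfolding in_hom_iff by blast
qed

lemma pullback_eqI:
  assumes pb: "pullback C f g P p1 p2"
    and xy: "x \<in> Ar C" "y \<in> Ar C" "Dom C x = Dom C y" "Cod C x = P" "Cod C y = P"
    and eq: "Comp C p1 x = Comp C p1 y" "Comp C p2 x = Comp C p2 y"
  shows "x = y"
proof -
  note F = pullbackD[OF pb]
  have "Comp C f (Comp C p1 x) = Comp C (Comp C g p2) x"
    using F(1,4,5,6,10) xy(1,4) Comp_assoc[of x p1 f] by simp
  then have "Comp C f (Comp C p1 x) = Comp C g (Comp C p2 x)"
    using F(2,5,7,8,9) xy(1,4) by simp
  moreover have "Comp C p1 x \<in> hom C (Dom C x) (Dom C f)" "Comp C p2 x \<in> hom C (Dom C x) (Dom C g)"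
    using F xy(1,4) by (simp_all add: in_hom_iff)
  ultimately have "\<exists>!u. u \<in> hom C (Dom C x) P \<and> Comp C p1 u = Comp C p1 x \<and> Comp C p2 u = Comp C p2 x"
    using pb unfolding pullback_def by blast
  moreover have "x \<in> hom C (Dom C x) P" "y \<in> hom C (Dom C x) P"
    using xy by (simp_all add: in_hom_iff)
  ultimately show ?thesis
    using eq by (metis (no_types, lifting))
qed

lemma coproduct2D:
  assumes "coproduct2 C A B S i1 i2"
  shows "i1 \<in> Ar C" "Dom C i1 = A" "Cod C i1 = S" "i2 \<in> Ar C" "Dom C i2 = B" "Cod C i2 = S"
proof -
  have "i1 \<in> hom C A S \<and> i2 \<in> hom C B S"
    using assms unfolding coproduct2_def by blast
  then show "i1 \<in> Ar C" "Dom C i1 = A" "Cod C i1 = S" "i2 \<in> Ar C" "Dom C i2 = B" "Cod C i2 = S"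
    unfolding in_hom_iff by simp_all
qed

lemma coproduct2_copair:
  assumes "coproduct2 C A B S i1 i2" "f \<in> hom C A Z" "g \<in> hom C B Z"
  obtains u where "u \<in> Ar C" "Dom C u = S" "Cod C u = Z" "Comp C u i1 = f" "Comp C u i2 = g"
proof -
  have "\<exists>u. u \<in> hom C S Z \<and> Comp C u i1 = f \<and> Comp C u i2 = g"
    using assms unfolding coproduct2_def by blast
  then show ?thesis
    using that unfolding in_hom_iff by blast
qed

lemma coproduct2_eqI:
  assumes cop: "coproduct2 C A B S i1 i2"
    and xy: "x \<in> Ar C" "y \<in> Ar C" "Dom C x = S" "Dom C y = S" "Cod C y = Cod C x"
    and eq: "Comp C x i1 = Comp C y i1" "Comp C x i2 = Comp C y i2"
  shows "x = y"
proof -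
  note F = coproduct2D[OF cop]
  have "Comp C x i1 \<in> hom C A (Cod C x)" "Comp C x i2 \<in> hom C B (Cod C x)"
    using F xy by (simp_all add: in_hom_iff)
  then have "\<exists>!u. u \<in> hom C S (Cod C x) \<and> Comp C u i1 = Comp C x i1 \<and> Comp C u i2 = Comp C x i2"
    using cop unfolding coproduct2_def by blast
  moreover have "x \<in> hom C S (Cod C x)" "y \<in> hom C S (Cod C x)"
    using xy by (simp_all add: in_hom_iff)
  ultimately show ?thesis
    using eq by (metis (no_types, lifting))
qed

lemma coproduct3D:
  assumes "coproduct3 C A B D S i1 i2 i3"
  shows "i1 \<in> Ar C" "Dom C i1 = A" "Cod C i1 = S" "i2 \<in> Ar C" "Dom C i2 = B" "Cod C i2 = S"
    "i3 \<in> Ar C" "Dom C i3 = D" "Cod C i3 = S"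
proof -
  have "i1 \<in> hom C A S \<and> i2 \<in> hom C B S \<and> i3 \<in> hom C D S"
    using assms unfolding coproduct3_def by blast
  then show "i1 \<in> Ar C" "Dom C i1 = A" "Cod C i1 = S" "i2 \<in> Ar C" "Dom C i2 = B" "Cod C i2 = S"
    "i3 \<in> Ar C" "Dom C i3 = D" "Cod C i3 = S"
    unfolding in_hom_iff by simp_all
qed

lemma has_finite_limits_pullback:
  assumes "has_finite_limits C" "f \<in> Ar C" "g \<in> Ar C" "Cod C f = Cod C g"
  obtains P p1 p2 where "pullback C f g P p1 p2"
  using assms unfolding has_finite_limits_def by blast

lemma regular_epi_pullback:
  assumes "regular_category C" "regular_epi C f" "pullback C f g P p1 p2"
  shows "regular_epi C p2"
  using assms unfolding regular_category_def by blast

lemma kernel_pair_coequalizer: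
  assumes "regular_category C" "f \<in> Ar C" "pullback C f f P p1 p2"
  obtains q where "coequalizer C p1 p2 q"
  using assms unfolding regular_category_def by blast

lemma regular_epi_cover:
  assumes reg: "regular_category C" and q: "regular_epi C q"
    and g: "g \<in> Ar C" "Cod C g = Cod C q"
  obtains Z x g' where "regular_epi C g'" "x \<in> hom C Z (Dom C q)" "g' \<in> hom C Z (Dom C g)"
    "Comp C q x = Comp C g g'"
proof -
  have "q \<in> Ar C"
    using q unfolding regular_epi_def coequalizer_def by blast
  moreover have "has_finite_limits C"
    using reg unfolding regular_category_def by blast
  ultimately obtain Z x g' where pb: "pullback C q g Z x g'"
    using has_finite_limits_pullback g by metis
  show ?thesis
    by (rule that[OF regular_epi_pullback[OF reg q pb]])
      (use pullbackD[OF pb] in \<open>simp_all add: in_hom_iff\<close>)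
qed

lemma monic_in_Ar: "monic C j \<Longrightarrow> j \<in> Ar C"
  unfolding monic_def by blast

lemma monicD:
  assumes "monic C j" "g \<in> Ar C" "h \<in> Ar C" "Dom C g = Dom C h" "Cod C g = Dom C j"
    "Cod C h = Dom C j" "Comp C j g = Comp C j h"
  shows "g = h"
  using assms unfolding monic_def by blast

lemma kernel_pair_coequalizer_eq:
  assumes kp: "pullback C m m K k1 k2" and cq: "coequalizer C k1 k2 q"
    and xy: "x \<in> Ar C" "y \<in> Ar C" "Dom C x = Dom C y" "Cod C x = Dom C m" "Cod C y = Dom C m"
    and eq: "Comp C m x = Comp C m y"
  shows "Comp C q x = Comp C q y"
proof -
  note K = pullbackD[OF kp] and Q = coequalizerD[OF cq]
  obtain w where w: "w \<in> Ar C" "Cod C w = K" "Comp C k1 w = x" "Comp C k2 w = y"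
    using pullback_pair[OF kp xy eq] by metis
  have "Comp C q (Comp C k1 w) = Comp C (Comp C q k1) w"
    using w(1,2) K Q(1-6) by simp
  also have "\<dots> = Comp C (Comp C q k2) w"
    by (simp only: Q(7))
  also have "\<dots> = Comp C q (Comp C k2 w)"
    using w(1,2) K Q(1-6) by simp
  finally show ?thesis
    using w(3,4) by simp
qed

lemma kernel_pair_coequalizer_factor_monic:
  assumes reg: "regular_category C" and kp: "pullback C m m K k1 k2"
    and cq: "coequalizer C k1 k2 q"
    and j: "j \<in> Ar C" "Dom C j = Cod C q" "Comp C j q = m"
  shows "monic C j"
  unfolding monic_def
proof (intro conjI allI impI)
  show "j \<in> Ar C" by (fact j(1))
  fix g h
  assume g: "g \<in> Ar C" "h \<in> Ar C" "Dom C g = Dom C h" "Cod C g = Dom C j" "Cod C h = Dom C j"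
    and jg: "Comp C j g = Comp C j h"
  \<comment> \<open>pull q back along g and then along h g' to replace g and h by elements of Dom m\<close>
  note K = pullbackD[OF kp] and Q = coequalizerD[OF cq]
  define S I A where "S = Dom C m" and "I = Dom C j" and "A = Dom C g"
  have rq: "regular_epi C q"
    unfolding regular_epi_def using cq by blast
  have ty: "Dom C q = S" "Cod C q = I" "Dom C g = A" "Dom C h = A" "Cod C g = I" "Cod C h = I"
    "Dom C k1 = K" "Dom C k2 = K" "Cod C k1 = S" "Cod C k2 = S"
    using g j K Q unfolding S_def I_def A_def by simp_all
  have "Cod C g = Cod C q"
    using ty by simp
  then obtain Z1 x g' where g': "regular_epi C g'" "x \<in> hom C Z1 S" "g' \<in> hom C Z1 A"
      "Comp C q x = Comp C g g'"
    using regular_epi_cover[OF reg rq g(1)] unfolding ty by blast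
  have hg': "Comp C h g' \<in> Ar C" "Cod C (Comp C h g') = Cod C q"
    using g g' ty by (simp_all add: in_hom_iff)
  obtain Z2 y h' where h': "regular_epi C h'" "y \<in> hom C Z2 (Dom C q)"
      "h' \<in> hom C Z2 (Dom C (Comp C h g'))" "Comp C q y = Comp C (Comp C h g') h'"
    by (rule regular_epi_cover[OF reg rq hg'])
  have ar: "x \<in> Ar C" "g' \<in> Ar C" "y \<in> Ar C" "h' \<in> Ar C"
    "Dom C x = Z1" "Cod C x = S" "Dom C g' = Z1" "Cod C g' = A"
    "Dom C y = Z2" "Cod C y = S" "Dom C h' = Z2" "Cod C h' = Z1"
    using g'(2,3) h'(2,3) g(2) ty by (auto simp: in_hom_iff)
  have hy: "Comp C q y = Comp C h (Comp C g' h')"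
    using h'(4) g ar ty by simp
  have gx: "Comp C q (Comp C x h') = Comp C g (Comp C g' h')"
    using g'(4) Comp_assoc[of h' x q] Comp_assoc[of h' g' g] Q(5) g ar ty by simp
  have "Comp C m (Comp C x h') = Comp C j (Comp C q (Comp C x h'))"
    using Comp_assoc[of "Comp C x h'" q j] j Q(5) ar ty by simp
  also have "\<dots> = Comp C j (Comp C h (Comp C g' h'))"
    using gx jg Comp_assoc[of "Comp C g' h'" g j] Comp_assoc[of "Comp C g' h'" h j] j g ar ty
    by simp
  also have "\<dots> = Comp C m y"
    using hy Comp_assoc[of y q j] j Q(5) ar ty by simp
  finally have "Comp C q (Comp C x h') = Comp C q y"
    by (rule kernel_pair_coequalizer_eq[OF kp cq, rotated -1]) (use ar ty in \<open>simp_all add: S_def\<close>)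
  then have "Comp C (Comp C g g') h' = Comp C (Comp C h g') h'"
    using gx hy g ar ty by simp
  then have "Comp C g g' = Comp C h g'"
    by (rule regular_epi_cancel[OF h'(1), rotated -1]) (use g ar ty in simp_all)
  then show "g = h"
    by (rule regular_epi_cancel[OF g'(1), rotated -1]) (use g ar ty in simp_all)
qed

lemma coequalizer_comp_iso:
  assumes cq: "coequalizer C f g q"
    and j: "j \<in> hom C (Cod C q) B" and t: "t \<in> hom C B (Cod C q)"
    and tj: "Comp C t j = Id C (Cod C q)" and jt: "Comp C j t = Id C B"
  shows "coequalizer C f g (Comp C j q)"
proof -
  note Q = coequalizerD[OF cq]
  have ty: "j \<in> Ar C" "Dom C j = Cod C q" "Cod C j = B" "t \<in> Ar C" "Dom C t = B" "Cod C t = Cod C q"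
    "Cod C q \<in> Ob C"
    using j t Q(5) by (simp_all add: in_hom_iff)
  have jq: "Comp C j q \<in> Ar C" "Dom C (Comp C j q) = Cod C f" "Cod C (Comp C j q) = B"
    "Comp C (Comp C j q) f = Comp C (Comp C j q) g"
    using Q ty by simp_all
  show ?thesis
    unfolding coequalizer_def
  proof (intro conjI ballI impI)
    fix h
    assume h: "h \<in> Ar C" "Dom C h = Cod C f" "Comp C h f = Comp C h g"
    obtain v where v: "v \<in> hom C (Cod C q) (Cod C h)" "Comp C v q = h"
      using coequalizer_factor[OF cq h] by blast
    have tv: "v \<in> Ar C" "Dom C v = Cod C q" "Cod C v = Cod C h"
      using v(1) by (simp_all add: in_hom_iff)
    show "\<exists>!x. x \<in> hom C (Cod C (Comp C j q)) (Cod C h) \<and> Comp C x (Comp C j q) = h"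
    proof
      show "Comp C v t \<in> hom C (Cod C (Comp C j q)) (Cod C h) \<and> Comp C (Comp C v t) (Comp C j q) = h"
        using Comp_assoc[of q j t] Comp_assoc[of "Comp C j q" t v] v(2) tj Q ty tv jq
        by (simp add: in_hom_iff)
    next
      fix x
      assume x: "x \<in> hom C (Cod C (Comp C j q)) (Cod C h) \<and> Comp C x (Comp C j q) = h"
      have tx: "x \<in> Ar C" "Dom C x = B" "Cod C x = Cod C h"
        using x jq by (simp_all add: in_hom_iff)
      have "Comp C x j = v"
        by (rule coequalizer_cancel[OF cq])
          (use x Comp_assoc[of q j x] v(2) Q ty tv tx in simp_all)
      then show "x = Comp C v t"
        using Comp_assoc[of t j x] jt ty tx by simp
    qed
  qed (use Q jq in simp_all)
qed

lemma regular_epi_if_monic_factors_split: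
  assumes reg: "regular_category C" and m: "m \<in> Ar C"
    and split: "\<And>j q. monic C j \<Longrightarrow> q \<in> Ar C \<Longrightarrow> Cod C q = Dom C j \<Longrightarrow> Comp C j q = m \<Longrightarrow>
      \<exists>t. t \<in> hom C (Cod C m) (Dom C j) \<and> Comp C j t = Id C (Cod C m)"
  shows "regular_epi C m"
proof -
  have "has_finite_limits C"
    using reg unfolding regular_category_def by blast
  then obtain K k1 k2 where kp: "pullback C m m K k1 k2"
    using has_finite_limits_pullback m by metis
  then obtain q where cq: "coequalizer C k1 k2 q"
    using kernel_pair_coequalizer[OF reg m] by blast
  note K = pullbackD[OF kp] and Q = coequalizerD[OF cq]
  obtain j where j: "j \<in> hom C (Cod C q) (Cod C m)" "Comp C j q = m"
    using coequalizer_factor[OF cq m] K Q by auto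
  have ty: "j \<in> Ar C" "Dom C j = Cod C q" "Cod C j = Cod C m"
    using j(1) by (simp_all add: in_hom_iff)
  have mono: "monic C j"
    using kernel_pair_coequalizer_factor_monic[OF reg kp cq ty(1,2) j(2)] .
  then obtain t where t: "t \<in> hom C (Cod C m) (Cod C q)" "Comp C j t = Id C (Cod C m)"
    using split[OF mono Q(5)] j(2) ty by auto
  have tt: "t \<in> Ar C" "Dom C t = Cod C m" "Cod C t = Cod C q"
    using t(1) by (simp_all add: in_hom_iff)
  have "Comp C t j = Id C (Cod C q)"
    by (rule monicD[OF mono])
      (use Comp_assoc[of j t j] t(2) ty tt Q(5) in simp_all)
  then have "coequalizer C k1 k2 (Comp C j q)"
    by (rule coequalizer_comp_iso[OF cq j(1) t(1)]) (fact t(2))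
  then show ?thesis
    unfolding regular_epi_def j(2) by blast
qed

end

text \<open>The mixed element \<langle>p1 j x, p2 j y\<rangle> of the pullback T factors through j; as T is a
  pullback, it is given by its two components.\<close>

definition mixes_through :: "('o, 'm) cat \<Rightarrow> 'm \<Rightarrow> 'm \<Rightarrow> 'm \<Rightarrow> 'm \<Rightarrow> 'm \<Rightarrow> bool" where
  "mixes_through C p1 p2 j x y \<longleftrightarrow>
     (\<exists>w \<in> Ar C. Dom C w = Dom C x \<and> Cod C w = Dom C j \<and>
        Comp C p1 (Comp C j w) = Comp C p1 (Comp C j x) \<and>
        Comp C p2 (Comp C j w) = Comp C p2 (Comp C j y))"

text \<open>The relation (l1 \<tau>, l2 \<tau>) on the domain of a monic j into the pullback T relates x and y
  iff they mix through j: L is the kernel pair of e p1 j, G : L \<rightarrow> T mixes the two legs of L,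
  and R is the inverse image of j under G.\<close>

locale mix_relation = category_ctx +
  fixes e e' T p1 p2 j L l1 l2 G R \<sigma> \<tau>
  assumes T: "pullback C e e' T p1 p2"
    and j: "monic C j" "Cod C j = T"
    and L: "pullback C (Comp C e (Comp C p1 j)) (Comp C e (Comp C p1 j)) L l1 l2"
    and G: "G \<in> hom C L T" "Comp C p1 G = Comp C p1 (Comp C j l1)"
      "Comp C p2 G = Comp C p2 (Comp C j l2)"
    and R: "pullback C j G R \<sigma> \<tau>"
begin

lemma T_typing [simp]:
  "e \<in> Ar C" "e' \<in> Ar C" "Cod C e' = Cod C e" "p1 \<in> Ar C" "Dom C p1 = T" "Cod C p1 = Dom C e"
  "p2 \<in> Ar C" "Dom C p2 = T" "Cod C p2 = Dom C e'" "j \<in> Ar C" "Cod C j = T"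
  using pullbackD[OF T] monic_in_Ar[OF j(1)] j(2) by simp_all

lemma L_typing [simp]:
  "l1 \<in> Ar C" "Dom C l1 = L" "Cod C l1 = Dom C j" "l2 \<in> Ar C" "Dom C l2 = L" "Cod C l2 = Dom C j"
  using pullbackD(4-9)[OF L] by simp_all

lemma R_typing [simp]:
  "G \<in> Ar C" "Dom C G = L" "Cod C G = T"
  "\<sigma> \<in> Ar C" "Dom C \<sigma> = R" "Cod C \<sigma> = Dom C j" "\<tau> \<in> Ar C" "Dom C \<tau> = R" "Cod C \<tau> = L"
  using pullbackD(4-9)[OF R] G(1) unfolding in_hom_iff by simp_all

lemma G_comp:
  assumes "w \<in> Ar C" "Cod C w = L"
  shows "Comp C p1 (Comp C G w) = Comp C p1 (Comp C j (Comp C l1 w))"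
    and "Comp C p2 (Comp C G w) = Comp C p2 (Comp C j (Comp C l2 w))"
  using assms G(2,3) Comp_assoc[of w G p1] Comp_assoc[of w G p2]
    Comp_assoc[of w l1 j] Comp_assoc[of "Comp C l1 w" j p1] Comp_assoc[of w "Comp C j l1" p1]
    Comp_assoc[of w l2 j] Comp_assoc[of "Comp C l2 w" j p2] Comp_assoc[of w "Comp C j l2" p2]
  by simp_all

lemma R_comp:
  assumes "h \<in> Ar C" "Cod C h = R"
  shows "Comp C j (Comp C \<sigma> h) = Comp C G (Comp C \<tau> h)"
  using assms pullbackD(10)[OF R] Comp_assoc[of h \<sigma> j] Comp_assoc[of h \<tau> G] by simp

lemma relation_on_legs: "relation_on C (Dom C j) (Comp C l1 \<tau>) (Comp C l2 \<tau>)"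
  unfolding relation_on_def
proof (intro conjI allI impI)
  show "Comp C l1 \<tau> \<in> hom C (Dom C (Comp C l1 \<tau>)) (Dom C j)"
    "Comp C l2 \<tau> \<in> hom C (Dom C (Comp C l1 \<tau>)) (Dom C j)"
    by (simp_all add: in_hom_iff)
  fix g h
  assume gh: "g \<in> Ar C" "h \<in> Ar C" "Dom C g = Dom C h" "Cod C g = Dom C (Comp C l1 \<tau>)"
    "Cod C h = Dom C (Comp C l1 \<tau>)"
    and eq: "Comp C (Comp C l1 \<tau>) g = Comp C (Comp C l1 \<tau>) h"
      "Comp C (Comp C l2 \<tau>) g = Comp C (Comp C l2 \<tau>) h"
  have cod: "Cod C g = R" "Cod C h = R"
    using gh(4,5) by simp_all
  have \<tau>: "Comp C \<tau> g = Comp C \<tau> h"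
    by (rule pullback_eqI[OF L]) (use gh cod eq in simp_all)
  have \<sigma>: "Comp C \<sigma> g = Comp C \<sigma> h"
    by (rule monicD[OF j(1)]) (use gh cod R_comp \<tau> in simp_all)
  show "g = h"
    by (rule pullback_eqI[OF R]) (use gh cod \<sigma> \<tau> in simp_all)
qed

lemma reflexive_rel_legs: "reflexive_rel C (Dom C j) (Comp C l1 \<tau>) (Comp C l2 \<tau>)"
proof -
  define I where "I = Dom C j"
  have I: "I \<in> Ob C" "Dom C j = I"
    unfolding I_def by simp_all
  obtain \<delta> where \<delta>: "\<delta> \<in> Ar C" "Dom C \<delta> = I" "Cod C \<delta> = L" "Comp C l1 \<delta> = Id C I"
      "Comp C l2 \<delta> = Id C I"
    using pullback_pair[OF L, of "Id C I" "Id C I"] I by auto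
  have "Comp C j (Id C I) = Comp C G \<delta>"
    by (rule pullback_eqI[OF T]) (use \<delta> I G_comp[OF \<delta>(1,3)] in simp_all)
  then obtain d where d: "d \<in> Ar C" "Dom C d = I" "Cod C d = R" "Comp C \<sigma> d = Id C I"
      "Comp C \<tau> d = \<delta>"
    using pullback_pair[OF R, of "Id C I" \<delta>] \<delta> I by auto
  have "Comp C (Comp C l1 \<tau>) d = Id C I" "Comp C (Comp C l2 \<tau>) d = Id C I"
    using d \<delta> by simp_all
  moreover have "d \<in> hom C I (Dom C (Comp C l1 \<tau>))"
    using d by (simp add: in_hom_iff)
  ultimately show ?thesis
    unfolding reflexive_rel_def I_def by blast
qed

lemma rel_mem_legs_iff:
  assumes xy: "x \<in> Ar C" "y \<in> Ar C" "Dom C x = Dom C y" "Cod C x = Dom C j" "Cod C y = Dom C j"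
  shows "rel_mem C (Comp C l1 \<tau>) (Comp C l2 \<tau>) x y \<longleftrightarrow> mixes_through C p1 p2 j x y"
proof
  assume "rel_mem C (Comp C l1 \<tau>) (Comp C l2 \<tau>) x y"
  then obtain h where h: "h \<in> Ar C" "Cod C h = R" "Comp C l1 (Comp C \<tau> h) = x"
      "Comp C l2 (Comp C \<tau> h) = y"
    unfolding rel_mem_def by auto
  have "Dom C (Comp C \<sigma> h) = Dom C x"
    using h by (simp flip: h(3))
  moreover have "Comp C p1 (Comp C j (Comp C \<sigma> h)) = Comp C p1 (Comp C j x)"
    "Comp C p2 (Comp C j (Comp C \<sigma> h)) = Comp C p2 (Comp C j y)"
    using R_comp[OF h(1,2)] G_comp[of "Comp C \<tau> h"] h by simp_all
  ultimately show "mixes_through C p1 p2 j x y"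
    unfolding mixes_through_def using h(1,2) by (intro bexI[of _ "Comp C \<sigma> h"]) simp_all
next
  assume "mixes_through C p1 p2 j x y"
  then obtain w where w: "w \<in> Ar C" "Dom C w = Dom C x" "Cod C w = Dom C j"
      "Comp C p1 (Comp C j w) = Comp C p1 (Comp C j x)" "Comp C p2 (Comp C j w) = Comp C p2 (Comp C j y)"
    unfolding mixes_through_def by blast
  have square: "Comp C e (Comp C p1 (Comp C j z)) = Comp C e' (Comp C p2 (Comp C j z))"
    if "z \<in> Ar C" "Cod C z = Dom C j" for z
    using that pullbackD(10)[OF T] Comp_assoc[of "Comp C j z" p1 e] Comp_assoc[of "Comp C j z" p2 e']
    by simp
  \<comment> \<open>a mixed element lies over a single element of the base, so x and y are in the kernel pair L\<close>
  have "Comp C (Comp C e (Comp C p1 j)) x = Comp C (Comp C e (Comp C p1 j)) y"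
    using square[OF w(1,3)] square[OF xy(2,5)] w(4,5) xy by simp
  then obtain v where v: "v \<in> Ar C" "Dom C v = Dom C x" "Cod C v = L" "Comp C l1 v = x"
      "Comp C l2 v = y"
    using pullback_pair[OF L, of x y] xy by auto
  have "Comp C j w = Comp C G v"
    by (rule pullback_eqI[OF T]) (use w v xy G_comp[OF v(1,3)] in simp_all)
  then obtain h where h: "h \<in> Ar C" "Cod C h = R" "Comp C \<tau> h = v"
    using pullback_pair[OF R, of w v] w v by auto
  show "rel_mem C (Comp C l1 \<tau>) (Comp C l2 \<tau>) x y"
    unfolding rel_mem_def using h v by (intro bexI[of _ h]) simp_all
qed

end

context category_ctx
begin

lemma mix_relation_exists:
  assumes lim: "has_finite_limits C" and T: "pullback C e e' T p1 p2"
    and j: "monic C j" "Cod C j = T"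
  obtains L l1 l2 G R \<sigma> \<tau> where "mix_relation C e e' T p1 p2 j L l1 l2 G R \<sigma> \<tau>"
proof -
  note TD = pullbackD[OF T]
  have ty: "j \<in> Ar C" "Cod C j = T" "Cod C p1 = Dom C e" "Cod C p2 = Dom C e'" "Dom C p1 = T"
    "Dom C p2 = T"
    using monic_in_Ar[OF j(1)] j(2) TD by simp_all
  define \<epsilon> where "\<epsilon> = Comp C e (Comp C p1 j)"
  have \<epsilon>: "\<epsilon> \<in> Ar C" "Dom C \<epsilon> = Dom C j"
    unfolding \<epsilon>_def using TD ty by simp_all
  obtain L l1 l2 where L: "pullback C \<epsilon> \<epsilon> L l1 l2"
    using has_finite_limits_pullback[OF lim \<epsilon>(1) \<epsilon>(1)] by blast
  note LD = pullbackD[OF L]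
  have l: "l1 \<in> Ar C" "l2 \<in> Ar C" "Cod C l1 = Dom C j" "Cod C l2 = Dom C j"
    using LD \<epsilon> by simp_all
  have "Comp C e (Comp C p1 (Comp C j l1)) = Comp C \<epsilon> l1"
    unfolding \<epsilon>_def using l TD(1-9) ty by simp
  also have "\<dots> = Comp C \<epsilon> l2"
    by (fact LD(10))
  also have "\<dots> = Comp C (Comp C e p1) (Comp C j l2)"
    unfolding \<epsilon>_def using l TD(1-9) ty by simp
  also have "\<dots> = Comp C (Comp C e' p2) (Comp C j l2)"
    by (simp only: TD(10))
  also have "\<dots> = Comp C e' (Comp C p2 (Comp C j l2))"
    using l TD(1-9) ty by simp
  finally have "Comp C e (Comp C p1 (Comp C j l1)) = Comp C e' (Comp C p2 (Comp C j l2))" .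
  then obtain G where G: "G \<in> Ar C" "Dom C G = L" "Cod C G = T"
      "Comp C p1 G = Comp C p1 (Comp C j l1)" "Comp C p2 G = Comp C p2 (Comp C j l2)"
    using pullback_pair[OF T, of "Comp C p1 (Comp C j l1)" "Comp C p2 (Comp C j l2)"] LD TD ty \<epsilon>
    by auto
  obtain R \<sigma> \<tau> where R: "pullback C j G R \<sigma> \<tau>"
    using has_finite_limits_pullback[OF lim ty(1) G(1)] j(2) G(3) by metis
  show ?thesis
  proof (rule that, unfold_locales)
    show "pullback C (Comp C e (Comp C p1 j)) (Comp C e (Comp C p1 j)) L l1 l2"
      using L unfolding \<epsilon>_def .
    show "G \<in> hom C L T"
      using G by (simp add: in_hom_iff)
  qed (fact T j G(4,5) R)+
qed

lemma maltsev_mixes_through_trans: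
  assumes mal: "maltsev C" and T: "pullback C e e' T p1 p2" and j: "monic C j" "Cod C j = T"
    and xyz: "x \<in> Ar C" "y \<in> Ar C" "z \<in> Ar C" "Dom C y = Dom C x" "Dom C z = Dom C x"
      "Cod C x = Dom C j" "Cod C y = Dom C j" "Cod C z = Dom C j"
    and mix: "mixes_through C p1 p2 j x y" "mixes_through C p1 p2 j y z"
  shows "mixes_through C p1 p2 j x z"
proof -
  have "has_finite_limits C"
    using mal unfolding maltsev_def by blast
  then obtain L l1 l2 G R \<sigma> \<tau> where "mix_relation C e e' T p1 p2 j L l1 l2 G R \<sigma> \<tau>"
    using mix_relation_exists[OF _ T j] by blast
  then interpret mix_relation C e e' T p1 p2 j L l1 l2 G R \<sigma> \<tau> .
  have "relation_on C (Dom C j) (Comp C l1 \<tau>) (Comp C l2 \<tau>) \<longrightarrow>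
      reflexive_rel C (Dom C j) (Comp C l1 \<tau>) (Comp C l2 \<tau>) \<longrightarrow>
      transitive_rel C (Comp C l1 \<tau>) (Comp C l2 \<tau>)"
    using mal unfolding maltsev_def by blast
  then have trans: "transitive_rel C (Comp C l1 \<tau>) (Comp C l2 \<tau>)"
    using relation_on_legs reflexive_rel_legs by blast
  have "rel_mem C (Comp C l1 \<tau>) (Comp C l2 \<tau>) x y" "rel_mem C (Comp C l1 \<tau>) (Comp C l2 \<tau>) y z"
    using rel_mem_legs_iff[of x y] rel_mem_legs_iff[of y z] mix xyz
    by simp_all
  then have "rel_mem C (Comp C l1 \<tau>) (Comp C l2 \<tau>) x z"
    using trans unfolding transitive_rel_def by blast
  then show ?thesis
    using rel_mem_legs_iff[of x z] xyz by simp
qed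

text \<open>In a Mal'tsev category the two canonical sections of the pullback T of split epimorphisms
  e and e' are jointly extremal-epic.\<close>

lemma maltsev_monic_through_sections_split:
  assumes mal: "maltsev C" and T: "pullback C e e' T p1 p2"
    and a1: "a1 \<in> hom C (Cod C e) (Dom C e)" "Comp C e a1 = Id C (Cod C e)"
    and b1: "b1 \<in> hom C (Cod C e) (Dom C e')" "Comp C e' b1 = Id C (Cod C e)"
    and j: "monic C j" "Cod C j = T"
    and s1: "s1 \<in> hom C (Dom C e) (Dom C j)" "Comp C p1 (Comp C j s1) = Id C (Dom C e)"
      "Comp C p2 (Comp C j s1) = Comp C b1 e"
    and s2: "s2 \<in> hom C (Dom C e') (Dom C j)" "Comp C p1 (Comp C j s2) = Comp C a1 e'"
      "Comp C p2 (Comp C j s2) = Id C (Dom C e')"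
  obtains t where "t \<in> hom C T (Dom C j)" "Comp C j t = Id C T"
proof -
  note TD = pullbackD[OF T]
  have ty: "e \<in> Ar C" "e' \<in> Ar C" "Cod C e' = Cod C e" "p1 \<in> Ar C" "Dom C p1 = T"
    "Cod C p1 = Dom C e" "p2 \<in> Ar C" "Dom C p2 = T" "Cod C p2 = Dom C e'" "j \<in> Ar C" "Cod C j = T"
    "a1 \<in> Ar C" "Dom C a1 = Cod C e" "Cod C a1 = Dom C e"
    "b1 \<in> Ar C" "Dom C b1 = Cod C e" "Cod C b1 = Dom C e'"
    "s1 \<in> Ar C" "Dom C s1 = Dom C e" "Cod C s1 = Dom C j"
    "s2 \<in> Ar C" "Dom C s2 = Dom C e'" "Cod C s2 = Dom C j"
    using TD(1-9) a1(1) b1(1) s1(1) s2(1) monic_in_Ar[OF j(1)] j(2) unfolding in_hom_iff by simp_all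
  have ep: "Comp C e' p2 = Comp C e p1"
    using TD(10) by simp
  have "Comp C e (Comp C a1 (Comp C e p1)) = Comp C (Comp C e a1) (Comp C e p1)"
    by (rule Comp_assoc[symmetric]) (use ty in simp_all)
  also have "\<dots> = Comp C e p1"
    using a1(2) ty by simp
  finally have retract: "Comp C e (Comp C a1 (Comp C e p1)) = Comp C e p1" .
  \<comment> \<open>j x1 has first component p1 and j x3 second component p2; x2 agrees with x1 in the
    second and with x3 in the first component, so x1, x2 and x2, x3 mix through j\<close>
  define x1 x2 x3 where "x1 = Comp C s1 p1" and "x2 = Comp C s1 (Comp C a1 (Comp C e p1))"
    and "x3 = Comp C s2 p2"
  have x: "x1 \<in> Ar C" "Dom C x1 = T" "Cod C x1 = Dom C j"
    "x2 \<in> Ar C" "Dom C x2 = T" "Cod C x2 = Dom C j" "x3 \<in> Ar C" "Dom C x3 = T" "Cod C x3 = Dom C j"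
    unfolding x1_def x2_def x3_def using ty by simp_all
  have x1: "Comp C p1 (Comp C j x1) = p1" "Comp C p2 (Comp C j x1) = Comp C b1 (Comp C e p1)"
    unfolding x1_def using Comp_assoc3_eq[OF s1(2)] Comp_assoc3_eq[OF s1(3)] ty by simp_all
  have x2: "Comp C p1 (Comp C j x2) = Comp C a1 (Comp C e p1)"
    "Comp C p2 (Comp C j x2) = Comp C b1 (Comp C e p1)"
    unfolding x2_def
    using Comp_assoc3_eq[OF s1(2)] Comp_assoc3_eq[OF s1(3)] retract ty
    by simp_all
  have x3: "Comp C p1 (Comp C j x3) = Comp C a1 (Comp C e p1)" "Comp C p2 (Comp C j x3) = p2"
    unfolding x3_def using Comp_assoc3_eq[OF s2(2)] Comp_assoc3_eq[OF s2(3)] ty ep by simp_all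
  have "mixes_through C p1 p2 j x1 x2" "mixes_through C p1 p2 j x2 x3"
    unfolding mixes_through_def using x x1 x2 x3 by auto
  then have "mixes_through C p1 p2 j x1 x3"
    using maltsev_mixes_through_trans[OF mal T j x(1,4,7) _ _ x(3,6,9)] x by simp
  then obtain w where w: "w \<in> Ar C" "Dom C w = T" "Cod C w = Dom C j"
      "Comp C p1 (Comp C j w) = p1" "Comp C p2 (Comp C j w) = p2"
    unfolding mixes_through_def using x x1 x3 by auto
  have "T \<in> Ob C"
    using Dom_in_Ob[of p1] ty by simp
  then have "Comp C j w = Id C T"
    using pullback_eqI[OF T, of "Comp C j w" "Id C T"] w ty by simp
  then show ?thesis
    using that[of w] w by (simp add: in_hom_iff)
qed

lemma regular_epi_if_sections_factor:
  assumes reg: "regular_category C" and mal: "maltsev C" and T: "pullback C e e' T p1 p2"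
    and a1: "a1 \<in> hom C (Cod C e) (Dom C e)" "Comp C e a1 = Id C (Cod C e)"
    and b1: "b1 \<in> hom C (Cod C e) (Dom C e')" "Comp C e' b1 = Id C (Cod C e)"
    and m: "m \<in> hom C S T"
    and c1: "c1 \<in> hom C (Dom C e) S" "Comp C p1 (Comp C m c1) = Id C (Dom C e)"
      "Comp C p2 (Comp C m c1) = Comp C b1 e"
    and c2: "c2 \<in> hom C (Dom C e') S" "Comp C p1 (Comp C m c2) = Comp C a1 e'"
      "Comp C p2 (Comp C m c2) = Id C (Dom C e')"
  shows "regular_epi C m"
proof (rule regular_epi_if_monic_factors_split[OF reg])
  show "m \<in> Ar C"
    using m by (simp add: in_hom_iff)
  fix j q
  assume j: "monic C j" and q: "q \<in> Ar C" "Cod C q = Dom C j" and jq: "Comp C j q = m"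
  have ty: "j \<in> Ar C" "Cod C j = T" "Dom C q = S" "c1 \<in> Ar C" "Dom C c1 = Dom C e" "Cod C c1 = S"
    "c2 \<in> Ar C" "Dom C c2 = Dom C e'" "Cod C c2 = S"
    using monic_in_Ar[OF j] m c1(1) c2(1) q jq unfolding in_hom_iff by auto
  have "Comp C m c = Comp C j (Comp C q c)" if "c \<in> Ar C" "Cod C c = S" for c
    using that q ty by (simp flip: jq)
  then obtain t where "t \<in> hom C T (Dom C j)" "Comp C j t = Id C T"
    using maltsev_monic_through_sections_split[OF mal T a1 b1 j(1) ty(2), of "Comp C q c1" "Comp C q c2"]
      c1 c2 q ty by (auto simp: in_hom_iff)
  then show "\<exists>t. t \<in> hom C (Cod C m) (Dom C j) \<and> Comp C j t = Id C (Cod C m)"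
    using m by (auto simp: in_hom_iff)
qed

end

theorem lemma2p2:
  fixes C :: "('o, 'm) cat"
  assumes reg: "regular_category C" and mal: "maltsev C" and pt: "pointed C"
    and lim: "has_finite_limits C" and colim: "has_finite_colimits C"
    and objs: "W \<in> Ob C" "X \<in> Ob C" "Y \<in> Ob C"
    \<comment> \<open>W + X + Y with injections i1, i2, i3\<close>
    and S: "coproduct3 C W X Y S i1 i2 i3"
    \<comment> \<open>W + X with injections a1, a2 and W + Y with injections b1, b2\<close>
    and P: "coproduct2 C W X P a1 a2"
    and Q: "coproduct2 C W Y Q b1 b2"
    \<comment> \<open>e = [1,0] : W + X \<rightarrow> W and e' = [1,0] : W + Y \<rightarrow> W\<close>
    and e: "e \<in> hom C P W" "Comp C e a1 = Id C W" "zero_mor C (Comp C e a2)"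
    and e': "e' \<in> hom C Q W" "Comp C e' b1 = Id C W" "zero_mor C (Comp C e' b2)"
    \<comment> \<open>T = (W + X) \<times>_W (W + Y) with projections p1, p2\<close>
    and T: "pullback C e e' T p1 p2"
    \<comment> \<open>u = [i1, i2, 0] and v = [i1, 0, i2]\<close>
    and u: "u \<in> hom C S P" "Comp C u i1 = a1" "Comp C u i2 = a2" "zero_mor C (Comp C u i3)"
    and v: "v \<in> hom C S Q" "Comp C v i1 = b1" "zero_mor C (Comp C v i2)" "Comp C v i3 = b2"
    \<comment> \<open>m = \<langle>u, v\<rangle>\<close>
    and m: "m \<in> hom C S T" "Comp C p1 m = u" "Comp C p2 m = v"
  shows "regular_epi C m \<and> (normal_category C \<longrightarrow> normal_epi C m)"
proof -
  interpret category_ctx C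
    using reg unfolding regular_category_def by unfold_locales blast
  have ty: "e \<in> Ar C" "Dom C e = P" "Cod C e = W" "e' \<in> Ar C" "Dom C e' = Q" "Cod C e' = W"
    "u \<in> Ar C" "Dom C u = S" "Cod C u = P" "v \<in> Ar C" "Dom C v = S" "Cod C v = Q"
    "P \<in> Ob C" "Q \<in> Ob C"
    using e(1) e'(1) u(1) v(1) by (auto simp: in_hom_iff)
  note ty' = ty coproduct3D[OF S] coproduct2D[OF P] coproduct2D[OF Q]
  obtain c1 where c1: "c1 \<in> hom C P S" "Comp C c1 a1 = i1" "Comp C c1 a2 = i2"
    using coproduct2_copair[OF P, of i1 S i2] ty' by (auto simp: in_hom_iff)
  obtain c2 where c2: "c2 \<in> hom C Q S" "Comp C c2 b1 = i1" "Comp C c2 b2 = i3"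
    using coproduct2_copair[OF Q, of i1 S i3] ty' by (auto simp: in_hom_iff)
  have zero: "Comp C v i2 = Comp C b1 (Comp C e a2)" "Comp C u i3 = Comp C a1 (Comp C e' b2)"
    using zero_mor_unique[OF v(3) zero_mor_comp[OF e(3), of b1]]
      zero_mor_unique[OF u(4) zero_mor_comp[OF e'(3), of a1]] ty' by simp_all
  note facts = u v c1 c2 e(2) e'(2) zero ty'
  have uv: "Comp C p1 (Comp C m c) = Comp C u c" "Comp C p2 (Comp C m c) = Comp C v c"
    if "c \<in> Ar C" "Cod C c = S" for c
    using Comp_assoc[of c m p1] Comp_assoc[of c m p2] m pullbackD[OF T] that by (simp_all add: in_hom_iff)
  have uc1: "Comp C u c1 = Id C P"
    by (rule coproduct2_eqI[OF P]) (use facts in \<open>simp_all add: in_hom_iff\<close>)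
  have vc1: "Comp C v c1 = Comp C b1 e"
    by (rule coproduct2_eqI[OF P]) (use facts in \<open>simp_all add: in_hom_iff\<close>)
  have uc2: "Comp C u c2 = Comp C a1 e'"
    by (rule coproduct2_eqI[OF Q]) (use facts in \<open>simp_all add: in_hom_iff\<close>)
  have vc2: "Comp C v c2 = Id C Q"
    by (rule coproduct2_eqI[OF Q]) (use facts in \<open>simp_all add: in_hom_iff\<close>)
  have "regular_epi C m"
    by (rule regular_epi_if_sections_factor[OF reg mal T, of a1 b1 m S c1 c2])
      (use facts m(1) uv uc1 vc1 uc2 vc2 in \<open>simp_all add: in_hom_iff\<close>)
  then show ?thesis
    unfolding normal_category_def by blast
qed

end
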